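(* Let $C^0\subset\mathcal{L}^0$ be a set of pairwise disjoint lines on ${\rm F}_5$ with $\#C^0=5$. Then $\#\varphi_{5,+}(C^0)\ge3$ or $\#\varphi_{5,-}(C^0)\ge3$.
   Context: ${\rm F}_5\subset\mathbb{P}^3(\mathbb{C})$ is the surface $x^5-y^5-z^5+w^5=0$. Let $\eta$ be a primitive 5th root of unity. For $k,i\in\{0,\dots,4\}$ let $L^0_{k,i}$ be the line $\{y=\eta^i x,\ w=\eta^k z\}$ and $\mathcal{L}^0=\{L^0_{k,i}\}_{k,i}$. Define $\varphi_{5,\pm}(k,i)=r_5(i\pm k)$, where $r_5$ is the remainder modulo 5, and for a set $X$ of lines $L^0_{k,i}$ let $\varphi_{5,\pm}(X)$ be the set of values $\varphi_{5,\pm}(k,i)$ over $L^0_{k,i}\in X$. *)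

theory Defs
  imports Complex_Main
begin

text \<open>Points of P^3(C) are represented by their nonzero affine representatives
(x,y,z,w) in C^4; a projective line is represented by its (punctured) cone.
Two projective lines are disjoint iff their punctured cones are disjoint.\<close>

definition F5 :: "(complex \<times> complex \<times> complex \<times> complex) set" where
  "F5 = {(x,y,z,w). (x,y,z,w) \<noteq> (0,0,0,0) \<and> x^5 - y^5 - z^5 + w^5 = 0}"

definition L0 :: "complex \<Rightarrow> nat \<Rightarrow> nat \<Rightarrow> (complex \<times> complex \<times> complex \<times> complex) set" where
  "L0 \<eta> k i = {(x,y,z,w). (x,y,z,w) \<noteq> (0,0,0,0) \<and> y = \<eta>^i * x \<and> w = \<eta>^k * z}"

definition L0_idx :: "(nat \<times> nat) set" where
  "L0_idx = {0..4} \<times> {0..4}"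

definition phi5_plus :: "nat \<times> nat \<Rightarrow> int" where
  "phi5_plus = (\<lambda>(k,i). (int i + int k) mod 5)"

definition phi5_minus :: "nat \<times> nat \<Rightarrow> int" where
  "phi5_minus = (\<lambda>(k,i). (int i - int k) mod 5)"

end

(*
  Two lines of \<L>^0 sharing the index k meet in (0:0:1:\<eta>^k), two sharing i meet in
  (1:\<eta>^i:0:0). So five disjoint lines form the graph {(k, \<sigma> k)} of a permutation \<sigma>
  of Z/5, and both \<Sum>k (\<sigma> k + k) and \<Sum>k (\<sigma> k - k) vanish mod 5. Five residues
  taking exactly two values u, v, with u taken m times, sum to m (u - v) + 5 v, which is
  nonzero mod 5 because 0 < m < 5. Hence if both images had fewer than three elements,
  \<sigma> k + k and \<sigma> k - k would both be constant, so 2 k would be constant: absurd.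
*)
theory Submission
  imports Defs "HOL-Computational_Algebra.Primes"
begin

lemma L0_contains_axis_points:
  "(1, \<eta> ^ i, 0, 0) \<in> L0 \<eta> k i" "(0, 0, 1, \<eta> ^ k) \<in> L0 \<eta> k i"
  by (simp_all add: L0_def)

lemma card_residue_image_neq_2:
  fixes f :: "'a \<Rightarrow> int" and p :: nat
  assumes p: "prime p" and card_A: "card A = p" and dvd_sum: "int p dvd (\<Sum>x\<in>A. f x)"
  shows "card ((\<lambda>x. f x mod p) ` A) \<noteq> 2"
proof
  define g where "g x = f x mod p" for x
  assume "card (g ` A) = 2"
  then obtain u v where uv: "g ` A = {u, v}" "u \<noteq> v"
    by (auto simp: card_2_iff g_def)
  have u_v_in: "u \<in> g ` A" "v \<in> g ` A"
    using uv(1) by auto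
  define B where "B = {x\<in>A. g x = u}"
  have fin: "finite A"
    using card_A p by (metis card.infinite not_prime_0)
  have g_A_minus_B: "g x = v" if "x \<in> A - B" for x
    using that uv unfolding B_def by blast
  have card_B_le: "card B \<le> p"
    using fin card_A by (metis B_def card_mono mem_Collect_eq subsetI)
  have card_A_minus_B: "card (A - B) = p - card B"
    using fin card_A by (simp add: B_def card_Diff_subset)
  have "(\<Sum>x\<in>A. g x) = (\<Sum>x\<in>B. g x) + (\<Sum>x\<in>A - B. g x)"
    using fin by (metis B_def add.commute mem_Collect_eq subsetI sum.subset_diff)
  also have "\<dots> = (\<Sum>x\<in>B. u) + (\<Sum>x\<in>A - B. v)"
    using g_A_minus_B by (intro arg_cong2[where f = "(+)"] sum.cong) (auto simp: B_def)
  also have "\<dots> = card B * u + card (A - B) * v"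
    by simp
  also have "\<dots> = card B * (u - v) + p * v"
    using card_A_minus_B card_B_le by (simp add: of_nat_diff algebra_simps)
  finally have "int p dvd card B * (u - v) + p * v"
    using dvd_sum mod_sum_eq[of f "int p" A] by (simp add: g_def dvd_eq_mod_eq_0)
  then have "int p dvd card B * (u - v)"
    by (simp add: dvd_add_left_iff)
  moreover have "\<not> int p dvd u - v"
  proof
    assume "int p dvd u - v"
    then have "u mod p = v mod p"
      by (simp add: mod_eq_dvd_iff)
    moreover have "u mod p = u" "v mod p = v"
      using u_v_in by (auto simp: g_def)
    ultimately show False
      using uv(2) by simp
  qed
  ultimately have "int p dvd int (card B)"
    using p by (simp add: prime_dvd_mult_iff)
  moreover have "0 < card B"
    using u_v_in fin by (auto simp: B_def card_gt_0_iff)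
  moreover have "B \<subset> A"
    using u_v_in uv(2) unfolding B_def by force
  then have "card B < p"
    using fin card_A psubset_card_mono by blast
  ultimately show False
    by (metis nat_dvd_not_less of_nat_dvd_iff)
qed

lemma image_eq_atLeastLessThan_if_inj_on:
  fixes f :: "'a \<Rightarrow> nat"
  assumes "inj_on f A" "f ` A \<subseteq> {0..<n}" "card A = n"
  shows "f ` A = {0..<n}"
  using assms by (simp add: card_image card_subset_eq)

lemma phi5_card_image_neq_2:
  assumes sub: "C \<subseteq> L0_idx" and card_C: "card C = 5"
    and inj_fst: "inj_on fst C" and inj_snd: "inj_on snd C"
  shows "card (phi5_plus ` C) \<noteq> 2" "card (phi5_minus ` C) \<noteq> 2"
proof -
  have bounds: "fst ` C \<subseteq> {0..<5}" "snd ` C \<subseteq> {0..<5}"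
    using sub by (auto simp: L0_idx_def)
  have "fst ` C = {0..<5}" and "snd ` C = {0..<5}"
    using image_eq_atLeastLessThan_if_inj_on inj_fst inj_snd bounds card_C by blast+
  then have sum_fst: "(\<Sum>p\<in>C. int (fst p)) = 10" and sum_snd: "(\<Sum>p\<in>C. int (snd p)) = 10"
    using sum.reindex[OF inj_fst, of int] sum.reindex[OF inj_snd, of int]
    by (simp_all add: eval_nat_numeral)
  have card_ne_2: "card ((\<lambda>p. h p mod int 5) ` C) \<noteq> 2" if "int 5 dvd (\<Sum>p\<in>C. h p)" for h
    using card_residue_image_neq_2[of 5 C h] card_C that by simp
  have phi_plus_eq: "phi5_plus = (\<lambda>p. (int (snd p) + int (fst p)) mod int 5)"
    by (auto simp: phi5_plus_def)
  show "card (phi5_plus ` C) \<noteq> 2"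
    unfolding phi_plus_eq using card_ne_2 by (simp add: sum.distrib sum_fst sum_snd)
  have phi_minus_eq: "phi5_minus = (\<lambda>p. (int (snd p) - int (fst p)) mod int 5)"
    by (auto simp: phi5_minus_def)
  show "card (phi5_minus ` C) \<noteq> 2"
    unfolding phi_minus_eq using card_ne_2 by (simp add: sum_subtractf sum_fst sum_snd)
qed

lemma phi5_card_ge_3_if_inj_on:
  assumes sub: "C \<subseteq> L0_idx" and card_C: "card C = 5"
    and inj_fst: "inj_on fst C" and inj_snd: "inj_on snd C"
  shows "card (phi5_plus ` C) \<ge> 3 \<or> card (phi5_minus ` C) \<ge> 3"
proof (rule ccontr)
  assume "\<not> ?thesis"
  then have plus_le_1: "card (phi5_plus ` C) \<le> 1" and minus_le_1: "card (phi5_minus ` C) \<le> 1"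
    using phi5_card_image_neq_2[OF assms] by linarith+
  have fin: "finite C"
    using card_C card.infinite by fastforce
  have const: "\<phi> p = \<phi> q" if "card (\<phi> ` C) \<le> 1" "p \<in> C" "q \<in> C" for \<phi> :: "nat \<times> nat \<Rightarrow> int" and p q
    using that fin by (metis One_nat_def card_le_Suc0_iff_eq finite_imageI imageI)
  have "fst ` C \<subseteq> {0..<5}"
    using sub by (auto simp: L0_idx_def)
  then have "fst ` C = {0..<5}"
    using image_eq_atLeastLessThan_if_inj_on inj_fst card_C by blast
  then have "\<exists>i. (k, i) \<in> C" if "k < 5" for k
    using that by force
  then obtain i0 i1 where i0: "(0, i0) \<in> C" and i1: "(1, i1) \<in> C"
    by fastforce
  have "phi5_plus (0, i0) = phi5_plus (1, i1)" "phi5_minus (0, i0) = phi5_minus (1, i1)"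
    using const[OF plus_le_1 i0 i1] const[OF minus_le_1 i0 i1] by simp_all
  then have "int i0 mod 5 = (int i1 + 1) mod 5" "int i0 mod 5 = (int i1 - 1) mod 5"
    by (simp_all add: phi5_plus_def phi5_minus_def)
  then show False
    by presburger
qed

lemma inj_on_fst_snd_if_L0_disjoint:
  assumes "\<forall>p\<in>C. \<forall>q\<in>C. p \<noteq> q \<longrightarrow> L0 \<eta> (fst p) (snd p) \<inter> L0 \<eta> (fst q) (snd q) = {}"
  shows "inj_on fst C" "inj_on snd C"
proof -
  have "L0 \<eta> (fst p) (snd p) \<inter> L0 \<eta> (fst q) (snd q) \<noteq> {}"
    if "fst p = fst q \<or> snd p = snd q" for p q :: "nat \<times> nat"
    using that by (metis IntI L0_contains_axis_points empty_iff)
  then show "inj_on fst C" "inj_on snd C"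
    using assms by (meson inj_onI)+
qed

theorem lemma3p3:
  fixes \<eta> :: complex and C :: "(nat \<times> nat) set"
  assumes eta: "\<eta> ^ 5 = 1" "\<eta> \<noteq> 1"
    and sub: "C \<subseteq> L0_idx"
    and disj: "\<forall>p\<in>C. \<forall>q\<in>C. p \<noteq> q \<longrightarrow>
                 L0 \<eta> (fst p) (snd p) \<inter> L0 \<eta> (fst q) (snd q) = {}"
    and card: "card C = 5"
  shows "card (phi5_plus ` C) \<ge> 3 \<or> card (phi5_minus ` C) \<ge> 3"
  using phi5_card_ge_3_if_inj_on[OF sub card] inj_on_fst_snd_if_L0_disjoint[OF disj] by blast

end
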